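(* Let $n\geq 2$ be an integer and $V$ a $\mathbb{Q}[\operatorname{SL}_2(\mathbb{Z})]$-module of length $\leq n$. Suppose that for all $k = 1,\dots, n$ one has in $\operatorname{End} V$: \[\frac{1}{(n-k)!}\,w x^{n-k} w x^{n-1} = \frac{(-1)^{n-k}}{(k-1)!}\, x^{k-1} w x^{n-1}.\] Suppose further that either $\ker x \cap \ker(x^{n-1}w) = 0$, or $V = \operatorname{im} x + \operatorname{im}(w x^{n-1})$. Then $V \simeq \bigoplus_I \mathbb{Q}\otimes_\mathbb{Z}\operatorname{Sym}^{n-1} \operatorname{Nat} \operatorname{SL}_2(\mathbb{Z})$ as $\mathbb{Q}[\operatorname{SL}_2(\mathbb{Z})]$-modules, for some index set $I$.
   Context: Let $u = \begin{pmatrix}1 & 1 \\ 0 & 1\end{pmatrix}$ and $w = \begin{pmatrix}0 & 1 \\ -1 & 0 \end{pmatrix}$ in $\operatorname{SL}_2(\mathbb{Z})$. The length of an $\operatorname{SL}_2(\mathbb{Z})$-module $V$ is the least $k$ with $(u-1)^k\cdot V = 0$. For a $\mathbb{Q}[\operatorname{SL}_2(\mathbb{Z})]$-module of finite length, $x = \log u = \sum_{k \geq 1} (-1)^{k+1}\frac{(u-1)^k}{k}\in\operatorname{End} V$ (a finite sum). $\mathbb{Q}\otimes_\mathbb{Z}\operatorname{Sym}^{n-1}\operatorname{Nat}\operatorname{SL}_2(\mathbb{Z})$ is the $\mathbb{Q}$-space of homogeneous polynomials of degree $n-1$ in $X,Y$ with the substitution action of $\operatorname{SL}_2(\mathbb{Z})\le\operatorname{SL}_2(\mathbb{Q})$.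 *)

theory Defs
  imports Main "HOL-Computational_Algebra.Polynomial"
begin

text \<open>2x2 integer matrices, written as (a,b,c,d) for the matrix with rows (a b) and (c d).\<close>
type_synonym mat2 = "int \<times> int \<times> int \<times> int"

fun mmul :: "mat2 \<Rightarrow> mat2 \<Rightarrow> mat2" where
  "mmul (a,b,c,d) (a',b',c',d') = (a*a'+b*c', a*b'+b*d', c*a'+d*c', c*b'+d*d')"

definition SL2Z :: "mat2 set" where
  "SL2Z = {(a,b,c,d). a*d - b*c = 1}"

definition mat_one :: mat2 where "mat_one = (1,0,0,1)"
definition mat_u :: mat2 where "mat_u = (1,1,0,1)"
definition mat_w :: mat2 where "mat_w = (0,1,-1,0)"

definition is_rep :: "(rat \<Rightarrow> 'v::ab_group_add \<Rightarrow> 'v) \<Rightarrow> (mat2 \<Rightarrow> 'v \<Rightarrow> 'v) \<Rightarrow> bool" where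
  "is_rep scale \<rho> \<longleftrightarrow> vector_space scale \<and>
     (\<forall>g\<in>SL2Z. Vector_Spaces.linear scale scale (\<rho> g)) \<and>
     \<rho> mat_one = id \<and>
     (\<forall>g\<in>SL2Z. \<forall>h\<in>SL2Z. \<rho> (mmul g h) = \<rho> g \<circ> \<rho> h)"

definition Nop :: "(mat2 \<Rightarrow> 'v::ab_group_add \<Rightarrow> 'v) \<Rightarrow> 'v \<Rightarrow> 'v" where
  "Nop \<rho> v = \<rho> mat_u v - v"

definition length_le :: "(mat2 \<Rightarrow> 'v::ab_group_add \<Rightarrow> 'v) \<Rightarrow> nat \<Rightarrow> bool" where
  "length_le \<rho> n \<longleftrightarrow> (\<forall>v. (Nop \<rho> ^^ n) v = 0)"

text \<open>x = log u = sum_{k>=1} (-1)^(k+1) (u-1)^k / k; for a module of length at most n the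
  terms with k >= n vanish, so summing up to n gives exactly log u.\<close>
definition xop :: "(rat \<Rightarrow> 'v::ab_group_add \<Rightarrow> 'v) \<Rightarrow> (mat2 \<Rightarrow> 'v \<Rightarrow> 'v) \<Rightarrow> nat \<Rightarrow> 'v \<Rightarrow> 'v" where
  "xop scale \<rho> n v = (\<Sum>k\<in>{1..n}. scale ((-1)^(k+1) / of_nat k) ((Nop \<rho> ^^ k) v))"

text \<open>Q (x) Sym^m Nat: homogeneous polynomials P(X,Y) of degree m over Q, encoded by the
  dehomogenisation p(t) = P(t,1), i.e. the rational polynomials of degree <= m
  (coefficient i of p = coefficient of X^i Y^(m-i) of P).\<close>
definition sym_carrier :: "nat \<Rightarrow> rat poly set" where
  "sym_carrier m = {p. degree p \<le> m}"

text \<open>Substitution action: g = (a,b,c,d) sends X to aX+cY and Y to bX+dY (the images of the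
  standard basis vectors e1, e2 of Nat = Z^2), i.e. (g.P)(X,Y) = P(aX+cY, bX+dY).\<close>
fun sym_act :: "nat \<Rightarrow> mat2 \<Rightarrow> rat poly \<Rightarrow> rat poly" where
  "sym_act m (a,b,c,d) p =
     (\<Sum>i\<le>m. smult (coeff p i) ([:of_int c, of_int a:] ^ i * [:of_int d, of_int b:] ^ (m - i)))"

definition dsum_carrier :: "'i set \<Rightarrow> nat \<Rightarrow> ('i \<Rightarrow> rat poly) set" where
  "dsum_carrier I m = {f. (\<forall>i. f i \<in> sym_carrier m) \<and> (\<forall>i. i \<notin> I \<longrightarrow> f i = 0)
                          \<and> finite {i. f i \<noteq> 0}}"

definition dsum_act :: "nat \<Rightarrow> mat2 \<Rightarrow> ('i \<Rightarrow> rat poly) \<Rightarrow> ('i \<Rightarrow> rat poly)" where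
  "dsum_act m g f = (\<lambda>i. sym_act m g (f i))"

definition iso_to_dsum ::
  "(rat \<Rightarrow> 'v::ab_group_add \<Rightarrow> 'v) \<Rightarrow> (mat2 \<Rightarrow> 'v \<Rightarrow> 'v) \<Rightarrow> 'i set \<Rightarrow> nat \<Rightarrow> ('v \<Rightarrow> 'i \<Rightarrow> rat poly) \<Rightarrow> bool" where
  "iso_to_dsum scale \<rho> I m \<phi> \<longleftrightarrow>
     inj \<phi> \<and> range \<phi> = dsum_carrier I m \<and>
     (\<forall>v1 v2. \<phi> (v1 + v2) = (\<lambda>i. \<phi> v1 i + \<phi> v2 i)) \<and>
     (\<forall>c v. \<phi> (scale c v) = (\<lambda>i. smult c (\<phi> v i))) \<and>
     (\<forall>g\<in>SL2Z. \<forall>v. \<phi> (\<rho> g v) = dsum_act m g (\<phi> v))"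

end

theory Submission
  imports Defs
begin

text \<open>
  Put \<open>m = n - 1\<close> and \<open>K = im x\<^sup>m\<close>. As \<open>(u - 1)\<^sup>n = 0\<close>, \<open>u = exp x\<close> with a finite sum. On \<open>K\<close>
  the hypothesis says \<open>w x\<^sup>j w = (-1)\<^sup>j j!/(m - j)! \<sqdot> x\<^sup>m\<^sup>-\<^sup>j w\<close>; in particular \<open>x\<^sup>m w\<close> is a
  nonzero multiple of the identity. Hence \<open>\<Psi>(a\<^sub>0, \<dots>, a\<^sub>m) = \<Sum> x\<^sup>j w a\<^sub>j\<close> is injective on \<open>K\<^sup>m\<^sup>+\<^sup>1\<close>
  (apply \<open>x\<^sup>m\<^sup>-\<^sup>i\<close> to isolate the lowest nonzero \<open>a\<^sub>i\<close>), and each of the two alternative hypotheses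
  makes it surjective, by induction on the nilpotency degree of \<open>x\<close>. Choosing a basis \<open>B\<close> of
  \<open>K\<close>, the element \<open>x\<^sup>j w a\<close> is sent to the family \<open>b \<mapsto> a\<^sub>b X\<^sup>j Y\<^sup>m\<^sup>-\<^sup>j / (m - j)!\<close> in
  \<open>\<Oplus>\<^sub>B Sym\<^sup>m\<close>. Both \<open>w\<close> and \<open>u = exp x\<close> act the same way on the two sides, and \<open>u\<close>, \<open>w\<close>
  generate \<open>SL\<^sub>2(\<int>)\<close>.
\<close>

section \<open>Truncated exponential and logarithm\<close>

definition trunc_log :: "nat \<Rightarrow> 'a::field_char_0 poly" where
  "trunc_log n = (\<Sum>k\<in>{1..n}. monom ((-1) ^ (k + 1) / of_nat k) k)"

definition trunc_exp :: "nat \<Rightarrow> 'a::field_char_0 poly \<Rightarrow> 'a poly" where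
  "trunc_exp n p = (\<Sum>k<n. smult (1 / fact k) (p ^ k))"

lemma coeff_trunc_log:
  "coeff (trunc_log n :: 'a::field_char_0 poly) i = (if 1 \<le> i \<and> i \<le> n then (-1) ^ (i + 1) / of_nat i else 0)"
  by (simp add: trunc_log_def coeff_sum coeff_monom)

lemma coeff_trunc_log_0 [simp]: "coeff (trunc_log n) 0 = 0"
  by (simp add: coeff_trunc_log)

lemma coeff_power_eq_0:
  fixes p :: "'a::comm_semiring_1 poly"
  assumes "coeff p 0 = 0" and "i < k"
  shows "coeff (p ^ k) i = 0"
proof -
  obtain q where p: "p = [:0, 1:] * q"
    using assms(1) by (cases p) simp
  have "p ^ k = monom 1 k * q ^ k"
    unfolding p power_mult_distrib by (simp add: monom_altdef)
  then show ?thesis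
    using assms(2) by (simp add: coeff_monom_mult)
qed

lemma coeff_mult_cong:
  assumes "\<And>j. j \<le> i \<Longrightarrow> coeff p j = coeff p' j" and "\<And>j. j \<le> i \<Longrightarrow> coeff q j = coeff q' j"
  shows "coeff (p * q) i = coeff (p' * q') i"
  using assms by (auto simp: coeff_mult intro!: sum.cong)

lemma coeff_one_plus_X_mult_pderiv_trunc_log:
  "i < n \<Longrightarrow> coeff ([:1, 1:] * pderiv (trunc_log n) :: 'a::field_char_0 poly) i = coeff 1 i"
  by (cases i) (simp_all add: coeff_pderiv coeff_trunc_log flip: of_nat_Suc)

lemma trunc_exp_Suc: "trunc_exp (Suc n) p = trunc_exp n p + smult (1 / fact n) (p ^ n)"
  by (simp add: trunc_exp_def)

lemma pderiv_trunc_exp: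
  "pderiv (trunc_exp (Suc n) p) = trunc_exp n p * pderiv p"
proof -
  have "pderiv (trunc_exp (Suc n) p) = (\<Sum>k<Suc n. smult (1 / fact k) (pderiv (p ^ k)))"
    unfolding trunc_exp_def higher_pderiv_sum[of 1, simplified] by (simp add: pderiv_smult)
  also have "\<dots> = (\<Sum>k<n. smult (1 / fact (Suc k)) (pderiv (p ^ Suc k)))"
    by (subst sum.lessThan_Suc_shift) simp
  also have "\<dots> = (\<Sum>k<n. smult (1 / fact k) (p ^ k) * pderiv p)"
    by (intro sum.cong refl) (simp add: pderiv_power_Suc del: power_Suc of_nat_Suc)
  finally show ?thesis
    by (simp add: trunc_exp_def sum_distrib_right)
qed

lemma coeff_trunc_exp_0:
  assumes "coeff p 0 = 0" and "0 < n"
  shows "coeff (trunc_exp n p) 0 = 1"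
proof -
  have "coeff (trunc_exp n p) 0 = (\<Sum>k<n. if k = 0 then 1 else 0)"
    unfolding trunc_exp_def coeff_sum using assms(1) by (intro sum.cong) (auto simp: coeff_power_eq_0)
  then show ?thesis
    using assms(2) by simp
qed

lemma coeff_trunc_exp_trunc_log_ode:
  fixes n :: nat and E :: "'a::field_char_0 poly"
  defines "E \<equiv> trunc_exp (Suc n) (trunc_log (Suc n))"
  assumes "i < n"
  shows "coeff ([:1, 1:] * pderiv E) i = coeff E i"
proof -
  let ?L = "trunc_log (Suc n) :: 'a poly"
  have "coeff ([:1, 1:] * pderiv E) i = coeff (trunc_exp n ?L * ([:1, 1:] * pderiv ?L)) i"
    unfolding E_def pderiv_trunc_exp by (metis mult.left_commute)
  also have "\<dots> = coeff (trunc_exp n ?L * 1) i"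
    using assms(2) by (intro coeff_mult_cong coeff_one_plus_X_mult_pderiv_trunc_log) auto
  also have "\<dots> = coeff E i"
    using assms(2) by (simp add: E_def trunc_exp_Suc coeff_power_eq_0)
  finally show ?thesis .
qed

text \<open>\<open>exp (log (1 + t)) = 1 + t\<close> modulo \<open>t\<^sup>n\<close>: both sides satisfy \<open>E(0) = 1\<close> and
  \<open>(1 + t) E' = E\<close> modulo \<open>t\<^sup>n\<^sup>-\<^sup>1\<close>, which determines the coefficients of \<open>E\<close> below \<open>n\<close>.\<close>
lemma coeff_trunc_exp_trunc_log:
  "i < n \<Longrightarrow> coeff (trunc_exp n (trunc_log n) :: 'a::field_char_0 poly) i = coeff [:1, 1:] i"
proof (induction i)
  case 0
  then show ?case
    by (simp add: coeff_trunc_exp_0)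
next
  case (Suc i)
  then obtain n' where n: "n = Suc n'" and i: "i < n'"
    by (cases n) auto
  let ?E = "trunc_exp n (trunc_log n) :: 'a poly"
  have ode: "coeff ([:1, 1:] * pderiv ?E) i = coeff ?E i"
    unfolding n using i by (rule coeff_trunc_exp_trunc_log_ode)
  have ih: "coeff ?E i = coeff [:1, 1:] i"
    using Suc by simp
  show ?case
  proof (cases i)
    case 0
    then show ?thesis
      using ode ih by (simp add: coeff_pderiv)
  next
    case (Suc j)
    then have "of_nat (Suc i) * coeff ?E (Suc i) + of_nat i * coeff ?E i = coeff ?E i"
      using ode by (simp add: coeff_pderiv algebra_simps)
    then have "of_nat (Suc i) * coeff ?E (Suc i) = 0"
      using ih Suc by (cases j) (auto simp: algebra_simps)
    then show ?thesis
      using Suc by (simp del: of_nat_Suc)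
  qed
qed

section \<open>The representation \<open>Sym\<^sup>m\<close>\<close>

lemma smult_sum_right: "smult c (sum f A) = (\<Sum>a\<in>A. smult c (f a))"
  by (induction A rule: infinite_finite_induct) (auto simp: smult_add_right)

lemma sym_act_add: "sym_act m g (p + q) = sym_act m g p + sym_act m g q"
  by (cases g) (simp add: sum.distrib smult_add_left)

lemma sym_act_smult: "sym_act m g (smult c p) = smult c (sym_act m g p)"
  by (cases g) (simp add: smult_sum_right)

lemma sym_act_0: "sym_act m g 0 = 0"
  by (cases g) simp

lemma sym_act_sum: "sym_act m g (sum f A) = (\<Sum>a\<in>A. sym_act m g (f a))"
  by (induction A rule: infinite_finite_induct) (auto simp: sym_act_0 sym_act_add)

lemma sym_act_monom:
  "j \<le> m \<Longrightarrow> sym_act m (a, b, c, d) (monom e j) =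
     smult e ([:of_int c, of_int a:] ^ j * [:of_int d, of_int b:] ^ (m - j))"
  by (simp add: coeff_monom if_distrib[of "\<lambda>c. smult c y" for y] sum.delta cong: if_cong)

lemma degree_sym_act: "degree (sym_act m g p) \<le> m"
proof -
  obtain a b c d where g: "g = (a, b, c, d)"
    by (cases g) auto
  have "degree ([:of_int c, of_int a:] ^ i * [:of_int d, of_int b:] ^ (m - i) :: rat poly) \<le> m"
    if "i \<le> m" for i
    using that by (intro order.trans[OF degree_mult_le] order.trans[OF add_mono[OF degree_power_le degree_power_le]]) auto
  then show ?thesis
    unfolding g sym_act.simps by (intro degree_sum_le order.trans[OF degree_smult_le]) auto
qed

lemma sym_act_one:
  assumes "degree p \<le> m"
  shows "sym_act m mat_one p = p"
proof -
  have "sym_act m mat_one p = (\<Sum>i\<le>m. monom (coeff p i) i)"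
    by (simp add: mat_one_def monom_altdef flip: one_pCons)
  also have "\<dots> = p"
    using assms by (rule poly_as_sum_of_monoms')
  finally show ?thesis .
qed

definition homog_eval :: "nat \<Rightarrow> rat poly \<Rightarrow> rat \<Rightarrow> rat \<Rightarrow> rat" where
  "homog_eval m q X Y = (\<Sum>i\<le>m. coeff q i * X ^ i * Y ^ (m - i))"

lemma homog_eval_scale: "homog_eval m q (k * X) (k * Y) = k ^ m * homog_eval m q X Y"
  unfolding homog_eval_def sum_distrib_left
proof (intro sum.cong refl)
  fix i assume "i \<in> {..m}"
  then have "k ^ m = k ^ i * k ^ (m - i)"
    by (simp flip: power_add)
  then show "coeff q i * (k * X) ^ i * (k * Y) ^ (m - i) = k ^ m * (coeff q i * X ^ i * Y ^ (m - i))"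
    by (simp add: power_mult_distrib)
qed

lemma homog_eval_eq_poly:
  assumes "degree q \<le> m" and "Y \<noteq> 0"
  shows "homog_eval m q X Y = Y ^ m * poly q (X / Y)"
proof -
  have "homog_eval m q X Y = Y ^ m * homog_eval m q (X / Y) 1"
    using homog_eval_scale[of m q Y "X / Y" 1] assms(2) by simp
  also have "homog_eval m q (X / Y) 1 = poly q (X / Y)"
    using assms(1) by (simp add: homog_eval_def poly_altdef) (intro sum.mono_neutral_right, auto simp: coeff_eq_0)
  finally show ?thesis .
qed

lemma poly_sym_act:
  "poly (sym_act m (a, b, c, d) q) t = homog_eval m q (of_int a * t + of_int c) (of_int b * t + of_int d)"
  by (simp add: homog_eval_def poly_sum algebra_simps)

lemma poly_eqI_cofinite:
  fixes p q :: "'a::{idom, ring_char_0} poly"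
  assumes "finite E" and "\<And>t. t \<notin> E \<Longrightarrow> poly p t = poly q t"
  shows "p = q"
proof (rule ccontr)
  assume "p \<noteq> q"
  then have "finite {t. poly (p - q) t = 0}"
    by (intro poly_roots_finite) simp
  moreover have "UNIV \<subseteq> {t. poly (p - q) t = 0} \<union> E"
    using assms(2) by auto
  ultimately show False
    using assms(1) infinite_UNIV_char_0 finite_subset by blast
qed

text \<open>Dehomogenising at \<open>Y = b t + d\<close> turns the action of \<open>g\<close> into substitution, except at the
  finitely many roots of \<open>b t + d\<close>.\<close>
lemma sym_act_mmul:
  assumes "(b, d) \<noteq> (0, 0)"
  shows "sym_act m (mmul (a, b, c, d) h) p = sym_act m (a, b, c, d) (sym_act m h p)"
proof -
  obtain a' b' c' d' where h: "h = (a', b', c', d')"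
    by (cases h) auto
  let ?E = "{t::rat. poly [:of_int d, of_int b:] t = 0}"
  show ?thesis
  proof (rule poly_eqI_cofinite)
    show "finite ?E"
      using assms by (intro poly_roots_finite) auto
  next
    fix t assume "t \<notin> ?E"
    define X where "X = of_int a * t + (of_int c :: rat)"
    define Y where "Y = of_int b * t + (of_int d :: rat)"
    have "Y \<noteq> 0"
      using \<open>t \<notin> ?E\<close> by (simp add: Y_def algebra_simps)
    then have Y_mult: "Y * (r * (X / Y) + s) = r * X + s * Y" for r s
      by (simp add: field_simps)
    have "poly (sym_act m (a, b, c, d) (sym_act m h p)) t = Y ^ m * poly (sym_act m h p) (X / Y)"
      unfolding poly_sym_act X_def[symmetric] Y_def[symmetric] using \<open>Y \<noteq> 0\<close>
      by (rule homog_eval_eq_poly[OF degree_sym_act])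
    also have "\<dots> = homog_eval m p (Y * (of_int a' * (X / Y) + of_int c')) (Y * (of_int b' * (X / Y) + of_int d'))"
      by (simp only: h poly_sym_act homog_eval_scale)
    also have "\<dots> = homog_eval m p (of_int a' * X + of_int c' * Y) (of_int b' * X + of_int d' * Y)"
      by (simp only: Y_mult)
    also have "\<dots> = poly (sym_act m (mmul (a, b, c, d) h) p) t"
      by (simp add: h poly_sym_act X_def Y_def algebra_simps del: sym_act.simps)
    finally show "poly (sym_act m (mmul (a, b, c, d) h) p) t = poly (sym_act m (a, b, c, d) (sym_act m h p)) t"
      by simp
  qed
qed

lemma mmul_SL2Z: "g \<in> SL2Z \<Longrightarrow> h \<in> SL2Z \<Longrightarrow> mmul g h \<in> SL2Z"
  by (cases g, cases h) (auto simp: SL2Z_def algebra_simps)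

lemma mat_u_SL2Z: "mat_u \<in> SL2Z" and mat_w_SL2Z: "mat_w \<in> SL2Z" and mat_one_SL2Z: "mat_one \<in> SL2Z"
  by (auto simp: SL2Z_def mat_u_def mat_w_def mat_one_def)

lemma sym_act_mmul_SL2Z:
  assumes "g \<in> SL2Z"
  shows "sym_act m (mmul g h) p = sym_act m g (sym_act m h p)"
proof -
  obtain a b c d where g: "g = (a, b, c, d)"
    by (cases g) auto
  then have "(b, d) \<noteq> (0, 0)"
    using assms by (auto simp: SL2Z_def)
  then show ?thesis
    unfolding g by (rule sym_act_mmul)
qed

text \<open>The basis \<open>e\<^sub>j = X\<^sup>j Y\<^sup>m\<^sup>-\<^sup>j / (m - j)!\<close> of \<open>Sym\<^sup>m\<close>: in it \<open>log u\<close> is the shift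
  \<open>e\<^sub>j \<mapsto> e\<^sub>j\<^sub>+\<^sub>1\<close> and \<open>w\<close> exchanges \<open>e\<^sub>j\<close> and \<open>e\<^sub>m\<^sub>-\<^sub>j\<close> up to the scalars of the hypothesis.\<close>
definition sym_basis :: "nat \<Rightarrow> nat \<Rightarrow> rat poly" where
  "sym_basis m j = (if j \<le> m then monom (1 / fact (m - j)) j else 0)"

lemma coeff_sym_basis: "coeff (sym_basis m j) l = (if j \<le> m \<and> l = j then 1 / fact (m - j) else 0)"
  by (simp add: sym_basis_def coeff_monom)

lemma degree_sym_basis: "degree (sym_basis m j) \<le> m"
  by (auto simp: sym_basis_def degree_monom_eq intro: order.trans[OF degree_monom_le])

lemma coeff_sum_sym_basis:
  "i \<le> m \<Longrightarrow> coeff (\<Sum>j\<le>m. smult (c j) (sym_basis m j)) i = c i / fact (m - i)"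
  by (simp add: coeff_sum coeff_sym_basis if_distrib[of "\<lambda>r. c _ * r"] cong: if_cong)

lemma sum_sym_basis_coeff:
  assumes "degree p \<le> m"
  shows "(\<Sum>j\<le>m. smult (coeff p j * fact (m - j)) (sym_basis m j)) = p"
proof -
  have "(\<Sum>j\<le>m. smult (coeff p j * fact (m - j)) (sym_basis m j)) = (\<Sum>j\<le>m. monom (coeff p j) j)"
    by (intro sum.cong refl) (simp add: sym_basis_def smult_monom)
  also have "\<dots> = p"
    using assms by (rule poly_as_sum_of_monoms')
  finally show ?thesis .
qed

lemma sym_act_w_sym_basis:
  assumes "j \<le> m"
  shows "sym_act m mat_w (sym_basis m j) = smult ((-1) ^ j * fact j / fact (m - j)) (sym_basis m (m - j))"
proof -
  have "sym_act m mat_w (sym_basis m j) = smult (1 / fact (m - j)) ([:-1:] ^ j * [:0, 1:] ^ (m - j))"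
    using assms by (simp add: mat_w_def sym_basis_def sym_act_monom del: sym_act.simps)
  also have "[:-1:] ^ j = ([:(-1) ^ j:] :: rat poly)"
    by (induction j) auto
  finally have "sym_act m mat_w (sym_basis m j) = smult ((-1) ^ j / fact (m - j)) (monom 1 (m - j))"
    by (simp add: monom_altdef)
  then show ?thesis
    using assms by (simp add: sym_basis_def smult_monom)
qed

lemma coeff_sym_act_u_sym_basis:
  assumes "j \<le> m"
  shows "coeff (sym_act m mat_u (sym_basis m j)) l =
    (if j \<le> l \<and> l \<le> m then 1 / (fact (l - j) * fact (m - l)) else 0)"
proof -
  have act: "sym_act m mat_u (sym_basis m j) = smult (1 / fact (m - j)) (monom 1 j * [:1, 1:] ^ (m - j))"
    using assms by (simp add: mat_u_def sym_basis_def sym_act_monom del: sym_act.simps) (simp add: monom_altdef)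
  consider "l < j" | "j \<le> l" "l \<le> m" | "m < l"
    by linarith
  then show ?thesis
  proof cases
    case 2
    then have "coeff ([:1, 1:] ^ (m - j)) (l - j) = (fact (m - j) / (fact (l - j) * fact (m - l)) :: rat)"
      by (simp add: coeff_linear_poly_power binomial_fact diff_diff_eq)
    then show ?thesis
      using 2 by (simp add: act coeff_monom_mult)
  next
    case 3
    have "degree ([:1, 1:] ^ (m - j) :: rat poly) \<le> m - j"
      by (rule order.trans[OF degree_power_le]) simp
    then show ?thesis
      using 3 assms by (simp add: act coeff_monom_mult coeff_eq_0)
  qed (simp add: act coeff_monom_mult)
qed

lemma sym_act_u_sym_basis:
  assumes "j \<le> m"
  shows "sym_act m mat_u (sym_basis m j) = (\<Sum>k\<le>m. smult (1 / fact k) (sym_basis m (j + k)))"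
proof (rule poly_eqI)
  fix l
  have "coeff (\<Sum>k\<le>m. smult (1 / fact k) (sym_basis m (j + k))) l =
      (\<Sum>k\<le>m. if k = l - j then (if j \<le> l \<and> l \<le> m then 1 / (fact (l - j) * fact (m - l)) else 0) else 0)"
    unfolding coeff_sum by (intro sum.cong) (auto simp: coeff_sym_basis)
  then show "coeff (sym_act m mat_u (sym_basis m j)) l = coeff (\<Sum>k\<le>m. smult (1 / fact k) (sym_basis m (j + k))) l"
    using assms by (auto simp: coeff_sym_act_u_sym_basis)
qed

section \<open>Generators of \<open>SL\<^sub>2(\<int>)\<close>\<close>

lemma translate_SL2Z: "(a, b, c, d) \<in> SL2Z \<Longrightarrow> (a + k * c, b + k * d, c, d) \<in> SL2Z"
  by (simp add: SL2Z_def algebra_simps)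

lemma euclid_step_SL2Z:
  assumes "(a, b, c, d) \<in> SL2Z"
  shows "(c, d, - (a mod c), (a div c) * d - b) \<in> SL2Z"
proof -
  have "d * (a mod c) + c * (d * (a div c)) = a * d"
    by (metis div_mult_mod_eq distrib_left mult.commute mult.left_commute add.commute)
  then show ?thesis
    using assms by (simp add: SL2Z_def algebra_simps)
qed

context
  fixes P :: "mat2 \<Rightarrow> bool"
  assumes P_u: "\<And>g. g \<in> SL2Z \<Longrightarrow> P g \<Longrightarrow> P (mmul mat_u g)"
    and P_w: "\<And>g. g \<in> SL2Z \<Longrightarrow> P g \<Longrightarrow> P (mmul mat_w g)"
begin

text \<open>Left multiplication by \<open>u\<^sup>k\<close>; the inverse \<open>u\<^sup>-\<^sup>1 = w u w u w\<close> comes from \<open>(w u)\<^sup>3 = -1 = w\<^sup>2\<close>.\<close>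
lemma translate_closed:
  assumes g: "(a, b, c, d) \<in> SL2Z" and "P (a, b, c, d)"
  shows "P (a + k * c, b + k * d, c, d)"
proof (induction k rule: int_induct[where k = 0])
  case base
  then show ?case
    using assms(2) by simp
next
  case (step1 i)
  have "mmul mat_u (a + i * c, b + i * d, c, d) = (a + (i + 1) * c, b + (i + 1) * d, c, d)"
    by (simp add: mat_u_def algebra_simps)
  then show ?case
    using P_u[OF translate_SL2Z[OF g] step1(2)] by simp
next
  case (step2 i)
  let ?g = "(a + i * c, b + i * d, c, d)"
  have "P (mmul mat_w (mmul mat_u (mmul mat_w (mmul mat_u (mmul mat_w ?g)))))"
    using step2(2) translate_SL2Z[OF g] by (intro P_u P_w mmul_SL2Z mat_u_SL2Z mat_w_SL2Z)
  moreover have "mmul mat_w (mmul mat_u (mmul mat_w (mmul mat_u (mmul mat_w ?g)))) =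
      (a + (i - 1) * c, b + (i - 1) * d, c, d)"
    by (simp add: mat_u_def mat_w_def algebra_simps)
  ultimately show ?case
    by simp
qed

lemma upper_triangular_closed:
  assumes "P mat_one" and "(a, b, 0, d) \<in> SL2Z"
  shows "P (a, b, 0, d)"
proof -
  have "a = 1 \<and> d = 1 \<or> a = -1 \<and> d = -1"
    using assms(2) zmult_eq_1_iff by (auto simp: SL2Z_def)
  moreover have "P (1, 0, 0, 1)" "(1, 0, 0, 1) \<in> SL2Z"
    using assms(1) mat_one_SL2Z by (simp_all add: mat_one_def)
  moreover have "P (mmul mat_w (mmul mat_w mat_one))"
    using assms(1) by (intro P_w mmul_SL2Z mat_w_SL2Z mat_one_SL2Z)
  then have "P (-1, 0, 0, -1)" "(-1, 0, 0, -1) \<in> SL2Z"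
    by (simp_all add: mat_one_def mat_w_def SL2Z_def)
  ultimately show ?thesis
    using translate_closed[of 1 0 0 1 b] translate_closed[of "-1" 0 0 "-1" "-b"] by auto
qed

text \<open>\<open>w\<^sup>3 = w\<^sup>-\<^sup>1\<close> swaps the rows up to sign; then \<open>u\<^sup>a\<^sup>d\<^sup>i\<^sup>v\<^sup>c\<close> turns \<open>a mod c\<close> back into \<open>a\<close>.\<close>
lemma euclid_step_closed:
  assumes "(a, b, c, d) \<in> SL2Z" and "P (c, d, - (a mod c), (a div c) * d - b)"
  shows "P (a, b, c, d)"
proof -
  let ?g = "(c, d, - (a mod c), (a div c) * d - b)"
  have g: "?g \<in> SL2Z"
    using assms(1) by (rule euclid_step_SL2Z)
  then have "P (mmul mat_w (mmul mat_w (mmul mat_w ?g)))"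
    using assms(2) by (intro P_w mmul_SL2Z mat_w_SL2Z)
  moreover have "mmul mat_w (mmul mat_w (mmul mat_w ?g)) = (a mod c, b - (a div c) * d, c, d)"
    by (simp add: mat_w_def)
  moreover have "(a mod c, b - (a div c) * d, c, d) \<in> SL2Z"
    using g by (simp add: SL2Z_def algebra_simps)
  ultimately show ?thesis
    using translate_closed[of "a mod c" "b - (a div c) * d" c d "a div c"] by (simp add: algebra_simps)
qed

end

text \<open>Euclid's algorithm on the first column.\<close>
lemma SL2Z_induct [consumes 1, case_names one u w]:
  assumes "g \<in> SL2Z"
    and "P mat_one"
    and P_u: "\<And>g. g \<in> SL2Z \<Longrightarrow> P g \<Longrightarrow> P (mmul mat_u g)"
    and P_w: "\<And>g. g \<in> SL2Z \<Longrightarrow> P g \<Longrightarrow> P (mmul mat_w g)"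
  shows "P g"
proof -
  have "(a, b, c, d) \<in> SL2Z \<Longrightarrow> P (a, b, c, d)" for a b c d
  proof (induction "nat \<bar>c\<bar>" arbitrary: a b c d rule: less_induct)
    case less
    show ?case
    proof (cases "c = 0")
      case True
      then show ?thesis
        using upper_triangular_closed[OF P_u P_w assms(2)] less.prems by simp
    next
      case False
      have "nat \<bar>- (a mod c)\<bar> < nat \<bar>c\<bar>"
        using False abs_mod_less by simp
      then have "P (c, d, - (a mod c), (a div c) * d - b)"
        using less.hyps euclid_step_SL2Z[OF less.prems] by blast
      then show ?thesis
        using euclid_step_closed[OF P_u P_w less.prems] by simp
    qed
  qed
  then show ?thesis
    using assms(1) by (cases g) blast
qed

section \<open>Unipotent representations\<close>

locale unipotent_rep =
  fixes scale :: "rat \<Rightarrow> 'v::ab_group_add \<Rightarrow> 'v" and \<rho> :: "mat2 \<Rightarrow> 'v \<Rightarrow> 'v" and n :: nat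
  assumes rep: "is_rep scale \<rho>" and len: "length_le \<rho> n" and n_pos: "0 < n"
begin

sublocale vector_space scale
  using rep by (simp add: is_rep_def)

sublocale vector_space_pair scale scale ..

abbreviation lin :: "('v \<Rightarrow> 'v) \<Rightarrow> bool" where "lin \<equiv> Vector_Spaces.linear scale scale"

lemma linear_funpow: "lin f \<Longrightarrow> lin (f ^^ k)"
  by (induction k) (simp_all add: linear_id Vector_Spaces.linear_compose)

lemma linear_rho: "g \<in> SL2Z \<Longrightarrow> lin (\<rho> g)"
  using rep by (simp add: is_rep_def)

lemma rho_mmul: "g \<in> SL2Z \<Longrightarrow> h \<in> SL2Z \<Longrightarrow> \<rho> (mmul g h) v = \<rho> g (\<rho> h v)"
  using rep by (simp add: is_rep_def)

lemma rho_one: "\<rho> mat_one v = v"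
  using rep by (simp add: is_rep_def)

abbreviation N :: "'v \<Rightarrow> 'v" where "N \<equiv> Nop \<rho>"
abbreviation x :: "'v \<Rightarrow> 'v" where "x \<equiv> xop scale \<rho> n"
abbreviation w :: "'v \<Rightarrow> 'v" where "w \<equiv> \<rho> mat_w"

lemma linear_w: "lin w"
  by (rule linear_rho[OF mat_w_SL2Z])

lemma w_w_w_w: "w (w (w (w v))) = v"
proof -
  have "w (w (w (w v))) = \<rho> (mmul mat_w (mmul mat_w (mmul mat_w mat_w))) v"
    by (simp add: rho_mmul mmul_SL2Z mat_w_SL2Z)
  also have "mmul mat_w (mmul mat_w (mmul mat_w mat_w)) = mat_one"
    by (simp add: mat_w_def mat_one_def)
  finally show ?thesis
    by (simp add: rho_one)
qed

lemma w_inj: "w v = w v' \<Longrightarrow> v = v'"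
  by (metis w_w_w_w)

lemma linear_N: "lin N"
  using linear_compose_sub[OF linear_rho[OF mat_u_SL2Z] linear_ident]
  by (simp add: Nop_def[abs_def])

lemma N_funpow_eq_0:
  assumes "n \<le> k"
  shows "(N ^^ k) v = 0"
proof -
  have "(N ^^ k) v = (N ^^ (k - n)) ((N ^^ n) v)"
    using assms by (metis funpow_add le_add_diff_inverse2 o_apply)
  also have "(N ^^ n) v = 0"
    using len by (simp add: length_le_def)
  finally show ?thesis
    by (simp add: linear_0[OF linear_funpow[OF linear_N]])
qed

text \<open>Evaluation of polynomials at the nilpotent operator \<open>N = u - 1\<close>; as \<open>N\<^sup>n = 0\<close>, only the
  coefficients below \<open>n\<close> matter.\<close>
definition N_eval :: "rat poly \<Rightarrow> 'v \<Rightarrow> 'v" where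
  "N_eval p v = (\<Sum>i<n. scale (coeff p i) ((N ^^ i) v))"

lemma N_eval_add: "N_eval (p + q) v = N_eval p v + N_eval q v"
  by (simp add: N_eval_def scale_left_distrib sum.distrib)

lemma N_eval_smult: "N_eval (smult c p) v = scale c (N_eval p v)"
  by (simp add: N_eval_def scale_sum_right)

lemma N_eval_0: "N_eval 0 v = 0"
  by (simp add: N_eval_def)

lemma N_eval_sum: "N_eval (sum f A) v = (\<Sum>a\<in>A. N_eval (f a) v)"
  by (induction A rule: infinite_finite_induct) (simp_all add: N_eval_0 N_eval_add)

lemma N_eval_monom: "N_eval (monom c k) v = scale c ((N ^^ k) v)"
  by (cases "k < n") (simp_all add: N_eval_def coeff_monom if_distrib[of "\<lambda>c. scale c _"] N_funpow_eq_0 cong: if_cong)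

lemma N_eval_one: "N_eval 1 v = v"
  using N_eval_monom[of 1 0] by (simp add: one_poly_def)

lemma N_eval_cong: "(\<And>i. i < n \<Longrightarrow> coeff p i = coeff q i) \<Longrightarrow> N_eval p v = N_eval q v"
  by (simp add: N_eval_def)

lemma N_eval_pCons: "N_eval (pCons a p) v = scale a v + N (N_eval p v)"
proof -
  obtain n' where n: "n = Suc n'"
    using n_pos by (cases n) auto
  have "N_eval (pCons a p) v = scale a v + (\<Sum>i<n'. scale (coeff p i) ((N ^^ Suc i) v))"
    unfolding N_eval_def unfolding n by (subst sum.lessThan_Suc_shift) simp
  also have "(\<Sum>i<n'. scale (coeff p i) ((N ^^ Suc i) v)) = (\<Sum>i<n. scale (coeff p i) ((N ^^ Suc i) v))"
    using N_funpow_eq_0[of "Suc n'" v] by (simp add: n)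
  also have "\<dots> = N (N_eval p v)"
    by (simp add: N_eval_def linear_sum[OF linear_N] linear_scale[OF linear_N])
  finally show ?thesis .
qed

lemma N_eval_mult: "N_eval (p * q) v = N_eval p (N_eval q v)"
proof (induction p arbitrary: v rule: pCons_induct)
  case (pCons a p)
  then show ?case
    by (simp add: N_eval_add N_eval_smult N_eval_pCons)
qed (simp add: N_eval_def)

lemma linear_x: "lin x"
  unfolding xop_def[abs_def]
  by (intro linear_compose_sum ballI linear_compose_scale_right linear_funpow linear_N)

lemma w_0 [simp]: "w 0 = 0"
  by (rule linear_0[OF linear_w])

lemma x_funpow_0 [simp]: "(x ^^ k) 0 = 0"
  by (rule linear_0[OF linear_funpow[OF linear_x]])

lemma x_eq_N_eval: "x v = N_eval (trunc_log n) v"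
  by (simp add: xop_def trunc_log_def N_eval_sum N_eval_monom)

lemma x_funpow_eq_N_eval: "(x ^^ k) v = N_eval (trunc_log n ^ k) v"
proof (induction k arbitrary: v)
  case 0
  then show ?case
    by (simp add: N_eval_one)
next
  case (Suc k)
  then show ?case
    by (simp only: funpow.simps comp_apply power_Suc N_eval_mult x_eq_N_eval)
qed

lemma x_funpow_eq_0: "n \<le> k \<Longrightarrow> (x ^^ k) v = 0"
  by (simp add: x_funpow_eq_N_eval N_eval_def coeff_power_eq_0)

lemma rho_u_eq_exp_x: "\<rho> mat_u v = (\<Sum>k<n. scale (1 / fact k) ((x ^^ k) v))"
proof -
  have "(\<Sum>k<n. scale (1 / fact k) ((x ^^ k) v)) = N_eval (trunc_exp n (trunc_log n)) v"
    by (simp add: trunc_exp_def N_eval_sum N_eval_smult x_funpow_eq_N_eval)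
  also have "\<dots> = N_eval [:1, 1:] v"
    by (intro N_eval_cong coeff_trunc_exp_trunc_log)
  also have "\<dots> = \<rho> mat_u v"
    by (simp only: N_eval_pCons) (simp add: N_eval_def Nop_def linear_0[OF linear_rho[OF mat_u_SL2Z]])
  finally show ?thesis
    by simp
qed

end

section \<open>The decomposition \<open>V \<cong> K\<^sup>m\<^sup>+\<^sup>1\<close>\<close>

locale lemma2_setting = unipotent_rep scale \<rho> n
  for scale :: "rat \<Rightarrow> 'v::ab_group_add \<Rightarrow> 'v" and \<rho> :: "mat2 \<Rightarrow> 'v \<Rightarrow> 'v" and n :: nat +
  assumes n_ge_2: "2 \<le> n"
    and rel: "\<forall>k\<in>{1..n}. \<forall>v.
        scale (1 / fact (n - k)) (\<rho> mat_w ((xop scale \<rho> n ^^ (n - k)) (\<rho> mat_w ((xop scale \<rho> n ^^ (n - 1)) v))))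
      = scale ((-1) ^ (n - k) / fact (k - 1)) ((xop scale \<rho> n ^^ (k - 1)) (\<rho> mat_w ((xop scale \<rho> n ^^ (n - 1)) v)))"
    and alt: "(\<forall>v. xop scale \<rho> n v = 0 \<and> (xop scale \<rho> n ^^ (n - 1)) (\<rho> mat_w v) = 0 \<longrightarrow> v = 0)
           \<or> (\<forall>v. \<exists>a b. v = xop scale \<rho> n a + \<rho> mat_w ((xop scale \<rho> n ^^ (n - 1)) b))"
begin

abbreviation m :: nat where "m \<equiv> n - 1"

lemma Suc_m: "Suc m = n"
  using n_ge_2 by simp

definition K :: "'v set" where
  "K = range (x ^^ m)"

definition w_coeff :: "nat \<Rightarrow> rat" where
  "w_coeff j = (-1) ^ j * fact j / fact (m - j)"

lemma w_coeff_nonzero: "w_coeff j \<noteq> 0"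
  by (simp add: w_coeff_def)

lemma subspace_K: "subspace K"
  unfolding K_def by (intro linear_subspace_image linear_funpow linear_x subspace_UNIV)

lemma x_on_K:
  assumes "a \<in> K"
  shows "x a = 0"
proof -
  obtain v where "a = (x ^^ m) v"
    using assms by (auto simp: K_def)
  then have "x a = (x ^^ Suc m) v"
    by simp
  then show ?thesis
    using x_funpow_eq_0[of "Suc m"] Suc_m by simp
qed

lemma w_x_funpow_w_on_K:
  assumes "j \<le> m" and "a \<in> K"
  shows "w ((x ^^ j) (w a)) = scale (w_coeff j) ((x ^^ (m - j)) (w a))"
proof -
  obtain v where v: "a = (x ^^ m) v"
    using assms(2) by (auto simp: K_def)
  have "n - j \<in> {1..n}" and "n - (n - j) = j" and "n - j - 1 = m - j"
    using assms(1) n_ge_2 by auto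
  then have "scale (1 / fact j) (w ((x ^^ j) (w a))) = scale ((-1) ^ j / fact (m - j)) ((x ^^ (m - j)) (w a))"
    using rel v by metis
  then have "scale (fact j) (scale (1 / fact j) (w ((x ^^ j) (w a)))) =
      scale (fact j * ((-1) ^ j / fact (m - j))) ((x ^^ (m - j)) (w a))"
    by simp
  then show ?thesis
    by (simp add: w_coeff_def)
qed

lemma x_top_w_on_K: "a \<in> K \<Longrightarrow> (x ^^ m) (w a) = scale (w_coeff m) a"
  using w_x_funpow_w_on_K[of m a] linear_scale[OF linear_w] by (auto intro: w_inj)

definition Psi :: "(nat \<Rightarrow> 'v) \<Rightarrow> 'v" where
  "Psi a = (\<Sum>j\<le>m. (x ^^ j) (w (a j)))"

lemma Psi_add: "Psi (\<lambda>j. a j + b j) = Psi a + Psi b"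
  by (simp add: Psi_def linear_add[OF linear_w] linear_add[OF linear_funpow[OF linear_x]] sum.distrib)

lemma Psi_scale: "Psi (\<lambda>j. scale c (a j)) = scale c (Psi a)"
  by (simp add: Psi_def linear_scale[OF linear_w] linear_scale[OF linear_funpow[OF linear_x]] scale_sum_right)

lemma Psi_diff: "Psi (\<lambda>j. a j - b j) = Psi a - Psi b"
  by (simp add: Psi_def linear_diff[OF linear_w] linear_diff[OF linear_funpow[OF linear_x]] sum_subtractf)

lemma Psi_cong: "(\<And>j. j \<le> m \<Longrightarrow> a j = b j) \<Longrightarrow> Psi a = Psi b"
  by (simp add: Psi_def)

lemma Psi_zero [simp]: "Psi (\<lambda>j. 0) = 0"
  by (simp add: Psi_def)

lemma Psi_single: "i \<le> m \<Longrightarrow> Psi (\<lambda>j. if j = i then z else 0) = (x ^^ i) (w z)"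
  by (simp add: Psi_def if_distrib[of "\<lambda>a. (x ^^ _) (w a)"] cong: if_cong)

lemma x_funpow_Psi: "(x ^^ k) (Psi a) = (\<Sum>j\<le>m. (x ^^ (k + j)) (w (a j)))"
  by (simp add: Psi_def linear_sum[OF linear_funpow[OF linear_x]] funpow_add)

lemma x_funpow_Psi_lowest:
  assumes "\<And>j. a j \<in> K" and "i \<le> m" and "\<And>j. j < i \<Longrightarrow> a j = 0"
  shows "(x ^^ (m - i)) (Psi a) = scale (w_coeff m) (a i)"
proof -
  have summand: "(x ^^ (m - i + j)) (w (a j)) = (if j = i then scale (w_coeff m) (a i) else 0)"
    if "j \<in> {..m}" for j
  proof -
    consider "j < i" | "j = i" | "i < j"
      by linarith
    then show ?thesis
    proof cases
      case 2
      moreover have "m - i + i = m"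
        using assms(2) by linarith
      ultimately show ?thesis
        using assms(1) x_top_w_on_K by simp
    next
      case 3
      then show ?thesis
        using that assms(2) x_funpow_eq_0[of "m - i + j"] by simp
    qed (simp add: assms(3))
  qed
  have "(x ^^ (m - i)) (Psi a) = (\<Sum>j\<le>m. if j = i then scale (w_coeff m) (a i) else 0)"
    unfolding x_funpow_Psi using summand by (rule sum.cong[OF refl])
  then show ?thesis
    using assms(2) by simp
qed

lemma Psi_eq_0:
  assumes "\<And>j. a j \<in> K" and "Psi a = 0" and "j \<le> m"
  shows "a j = 0"
proof -
  have "\<forall>j<i. a j = 0" if "i \<le> Suc m" for i
    using that
  proof (induction i)
    case (Suc i)
    then have "scale (w_coeff m) (a i) = 0"
      using x_funpow_Psi_lowest[of a i] assms(1,2) by simp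
    then show ?case
      using Suc w_coeff_nonzero less_Suc_eq by auto
  qed simp
  then show ?thesis
    using assms(3) by blast
qed

lemma Psi_eq_imp_eq:
  assumes "\<And>j. a j \<in> K" and "\<And>j. b j \<in> K" and "Psi a = Psi b" and "j \<le> m"
  shows "a j = b j"
  using Psi_eq_0[of "\<lambda>j. a j - b j" j] subspace_diff[OF subspace_K] assms by (simp add: Psi_diff)

lemma x_Psi_shift:
  assumes "a 0 = 0"
  shows "x (Psi (\<lambda>j. a (Suc j))) = Psi a"
proof -
  let ?f = "\<lambda>j. (x ^^ j) (w (a j))"
  have "x (Psi (\<lambda>j. a (Suc j))) = (\<Sum>j\<le>m. ?f (Suc j))"
    using x_funpow_Psi[of 1] by simp
  also have "\<dots> = (\<Sum>j\<le>Suc m. ?f j)"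
    using assms by (simp add: sum.atMost_Suc_shift del: sum.atMost_Suc)
  also have "\<dots> = Psi a"
    using x_funpow_eq_0[of "Suc m"] by (simp add: Psi_def Suc_m)
  finally show ?thesis .
qed

lemma ker_x_subset_range_Psi:
  assumes trivial: "\<forall>v. x v = 0 \<and> (x ^^ m) (w v) = 0 \<longrightarrow> v = 0" and "x v = 0"
  shows "\<exists>a. (\<forall>j. a j \<in> K) \<and> v = Psi a"
proof -
  define c where "c = w_coeff m"
  define b where "b = (x ^^ m) (w v)"
  have b: "b \<in> K"
    by (simp add: b_def K_def)
  have "v - scale (1 / c) b = 0"
  proof (rule trivial[rule_format], intro conjI)
    show "x (v - scale (1 / c) b) = 0"
      using assms(2) x_on_K[OF b] by (simp add: linear_diff[OF linear_x] linear_scale[OF linear_x])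
    have "(x ^^ m) (w (v - scale (1 / c) b)) = b - scale (1 / c) ((x ^^ m) (w b))"
      by (simp add: b_def linear_diff[OF linear_w] linear_scale[OF linear_w]
          linear_diff[OF linear_funpow[OF linear_x]] linear_scale[OF linear_funpow[OF linear_x]])
    also have "\<dots> = b - scale (1 / c) (scale c b)"
      using x_top_w_on_K[OF b] by (simp add: c_def)
    also have "\<dots> = 0"
      using w_coeff_nonzero by (simp add: c_def)
    finally show "(x ^^ m) (w (v - scale (1 / c) b)) = 0" .
  qed
  moreover have "scale (1 / c) b = (x ^^ m) (w (scale (1 / c ^ 2) b))"
    using x_top_w_on_K[OF subspace_scale[OF subspace_K b]] w_coeff_nonzero by (simp add: c_def power2_eq_square)
  moreover define a where "a = (\<lambda>j. if j = m then scale (1 / c ^ 2) b else 0)"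
  ultimately have "v = Psi a"
    by (simp add: Psi_single)
  moreover have "\<forall>j. a j \<in> K"
    using subspace_scale[OF subspace_K b] subspace_0[OF subspace_K] by (simp add: a_def)
  ultimately show ?thesis
    by blast
qed

lemma range_Psi_if_kernels_meet_trivially:
  assumes trivial: "\<forall>v. x v = 0 \<and> (x ^^ m) (w v) = 0 \<longrightarrow> v = 0"
  shows "(x ^^ i) v = 0 \<Longrightarrow> \<exists>a. (\<forall>j. a j \<in> K) \<and> v = Psi a"
proof (induction i arbitrary: v)
  case 0
  then show ?case
    using subspace_0[OF subspace_K] by (intro exI[of _ "\<lambda>j. 0"]) simp
next
  case (Suc i)
  then obtain a where a: "\<forall>j. a j \<in> K" and xv: "x v = Psi a"
    by (metis funpow_Suc_right o_apply)
  have "scale (w_coeff m) (a 0) = (x ^^ m) (x v)"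
    using x_funpow_Psi_lowest[of a 0] a by (simp add: xv)
  also have "\<dots> = (x ^^ Suc m) v"
    by (simp only: funpow_Suc_right o_apply)
  also have "\<dots> = 0"
    using x_funpow_eq_0[of "Suc m"] Suc_m by simp
  finally have "a 0 = 0"
    using w_coeff_nonzero by simp
  then have "x (v - Psi (\<lambda>j. a (Suc j))) = 0"
    by (simp add: linear_diff[OF linear_x] x_Psi_shift xv)
  then obtain b where b: "\<forall>j. b j \<in> K" and "v - Psi (\<lambda>j. a (Suc j)) = Psi b"
    using ker_x_subset_range_Psi[OF trivial] by blast
  then have "v = Psi (\<lambda>j. a (Suc j) + b j)"
    by (simp add: Psi_add algebra_simps)
  moreover have "\<forall>j. a (Suc j) + b j \<in> K"
    using a b subspace_add[OF subspace_K] by blast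
  ultimately show ?case
    by (intro exI[of _ "\<lambda>j. a (Suc j) + b j"]) simp
qed

lemma range_Psi_if_images_span:
  assumes span: "\<forall>v. \<exists>a b. v = x a + w ((x ^^ m) b)"
  shows "\<exists>y a. (\<forall>j. a j \<in> K) \<and> v = (x ^^ i) y + Psi a"
proof (induction i)
  case 0
  show ?case
    using subspace_0[OF subspace_K] by (intro exI[of _ v] exI[of _ "\<lambda>j. 0"]) simp
next
  case (Suc i)
  then obtain y a where a: "\<forall>j. a j \<in> K" and v: "v = (x ^^ i) y + Psi a"
    by blast
  obtain y' b where y: "y = x y' + w ((x ^^ m) b)"
    using span by blast
  show ?case
  proof (cases "i \<le> m")
    case True
    define a' where "a' = (\<lambda>j. a j + (if j = i then (x ^^ m) b else 0))"
    have "(x ^^ i) y = (x ^^ Suc i) y' + (x ^^ i) (w ((x ^^ m) b))"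
      by (simp add: y linear_add[OF linear_funpow[OF linear_x]] funpow_Suc_right del: funpow.simps)
    then have "v = (x ^^ Suc i) y' + Psi a'"
      using True by (simp add: v a'_def Psi_add Psi_single)
    moreover have "\<forall>j. a' j \<in> K"
      using a subspace_add[OF subspace_K] subspace_0[OF subspace_K] by (auto simp: a'_def K_def)
    ultimately show ?thesis
      by blast
  next
    case False
    then have "v = (x ^^ Suc i) y + Psi a"
      using v x_funpow_eq_0 linear_0[OF linear_x] by simp
    then show ?thesis
      using a by blast
  qed
qed

lemma range_Psi: "\<exists>a. (\<forall>j. a j \<in> K) \<and> v = Psi a"
  using alt
proof
  assume "\<forall>v. x v = 0 \<and> (x ^^ m) (w v) = 0 \<longrightarrow> v = 0"
  then show ?thesis
    using range_Psi_if_kernels_meet_trivially x_funpow_eq_0[of n] by blast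
next
  assume "\<forall>v. \<exists>a b. v = x a + w ((x ^^ m) b)"
  then show ?thesis
    using range_Psi_if_images_span[where i = n] x_funpow_eq_0[of n] by auto
qed

end

section \<open>The isomorphism with \<open>\<Oplus>\<^sub>B Sym\<^sup>m\<close>\<close>

context vector_space
begin

lemma representation_sum_scale:
  assumes "independent B" and "finite S" and "S \<subseteq> B"
  shows "representation B (\<Sum>b\<in>S. scale (c b) b) b' = (if b' \<in> S then c b' else 0)"
proof -
  have "representation B (\<Sum>b\<in>S. scale (c b) b) b' = (\<Sum>b\<in>S. c b * representation B b b')"
    using assms by (simp add: representation_sum representation_scale span_base span_scale subsetD)
  also have "\<dots> = (\<Sum>b\<in>S. if b = b' then c b' else 0)"
    using assms by (intro sum.cong refl) (auto simp: representation_basis)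
  finally show ?thesis
    using assms(2) by simp
qed

end

context lemma2_setting
begin

definition coord :: "'v \<Rightarrow> nat \<Rightarrow> 'v" where
  "coord v = (SOME a. (\<forall>j. a j \<in> K) \<and> v = Psi a)"

lemma coord_in_K: "coord v j \<in> K" and Psi_coord: "Psi (coord v) = v"
  using someI_ex[OF range_Psi[of v]] by (simp_all add: coord_def)

lemma coord_Psi: "(\<And>j. a j \<in> K) \<Longrightarrow> j \<le> m \<Longrightarrow> coord (Psi a) j = a j"
  using Psi_eq_imp_eq[of "coord (Psi a)" a j] coord_in_K Psi_coord by blast

lemma coord_add: "j \<le> m \<Longrightarrow> coord (v + v') j = coord v j + coord v' j"
  using coord_Psi[of "\<lambda>j. coord v j + coord v' j" j] coord_in_K subspace_add[OF subspace_K]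
  by (simp add: Psi_add Psi_coord)

lemma coord_scale: "j \<le> m \<Longrightarrow> coord (scale c v) j = scale c (coord v j)"
  using coord_Psi[of "\<lambda>j. scale c (coord v j)" j] coord_in_K subspace_scale[OF subspace_K]
  by (simp add: Psi_scale Psi_coord)

definition basis_K :: "'v set" where
  "basis_K = (SOME B. B \<subseteq> K \<and> independent B \<and> K \<subseteq> span B)"

lemma independent_basis_K: "independent basis_K" and span_basis_K: "span basis_K = K"
proof -
  obtain B where "B \<subseteq> K" "independent B" "K \<subseteq> span B"
    by (rule maximal_independent_subset)
  then have "basis_K \<subseteq> K \<and> independent basis_K \<and> K \<subseteq> span basis_K"
    unfolding basis_K_def by (intro someI[of "\<lambda>B. B \<subseteq> K \<and> independent B \<and> K \<subseteq> span B"]) blast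
  then show "independent basis_K" "span basis_K = K"
    using span_minimal[OF _ subspace_K] by auto
qed

abbreviation repr :: "'v \<Rightarrow> 'v \<Rightarrow> rat" where
  "repr \<equiv> representation basis_K"

lemma in_K_in_span: "a \<in> K \<Longrightarrow> a \<in> span basis_K"
  by (simp add: span_basis_K)

definition phi :: "'v \<Rightarrow> 'v \<Rightarrow> rat poly" where
  "phi v = (\<lambda>b. \<Sum>j\<le>m. smult (repr (coord v j) b) (sym_basis m j))"

lemma phi_Psi: "(\<And>j. a j \<in> K) \<Longrightarrow> phi (Psi a) = (\<lambda>b. \<Sum>j\<le>m. smult (repr (a j) b) (sym_basis m j))"
  by (simp add: phi_def coord_Psi)

lemma phi_add: "phi (v + v') = (\<lambda>b. phi v b + phi v' b)"
  by (simp add: phi_def coord_add representation_add[OF independent_basis_K in_K_in_span in_K_in_span]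
      coord_in_K smult_add_left sum.distrib)

lemma phi_scale: "phi (scale c v) = (\<lambda>b. smult c (phi v b))"
  by (simp add: phi_def coord_scale representation_scale[OF independent_basis_K in_K_in_span]
      coord_in_K smult_sum_right)

lemma phi_sum: "phi (sum f A) = (\<lambda>b. \<Sum>i\<in>A. phi (f i) b)"
proof (induction A rule: infinite_finite_induct)
  case (infinite A)
  then show ?case
    using phi_scale[of 0 0] by simp
next
  case empty
  then show ?case
    using phi_scale[of 0 0] by simp
qed (simp add: phi_add)

lemma phi_x_funpow_w:
  assumes "a \<in> K"
  shows "phi ((x ^^ l) (w a)) = (\<lambda>b. smult (repr a b) (sym_basis m l))"
proof (cases "l \<le> m")
  case True
  have "phi ((x ^^ l) (w a)) = phi (Psi (\<lambda>j. if j = l then a else 0))"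
    using True by (simp add: Psi_single)
  also have "\<dots> = (\<lambda>b. smult (repr a b) (sym_basis m l))"
    using assms subspace_0[OF subspace_K] True
    by (simp add: phi_Psi if_distrib[of "\<lambda>a. smult (repr a _) _"] representation_zero cong: if_cong)
  finally show ?thesis .
next
  case False
  then show ?thesis
    using x_funpow_eq_0[of l] phi_scale[of 0 0] by (simp add: sym_basis_def)
qed

lemma phi_w: "phi (w v) = dsum_act m mat_w (phi v)"
proof -
  have "w v = w (Psi (coord v))"
    by (simp add: Psi_coord)
  also have "\<dots> = (\<Sum>j\<le>m. w ((x ^^ j) (w (coord v j))))"
    by (simp add: Psi_def linear_sum[OF linear_w])
  also have "\<dots> = (\<Sum>j\<le>m. scale (w_coeff j) ((x ^^ (m - j)) (w (coord v j))))"
    by (intro sum.cong refl w_x_funpow_w_on_K coord_in_K) simp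
  finally have "phi (w v) = (\<lambda>b. \<Sum>j\<le>m. smult (w_coeff j) (smult (repr (coord v j) b) (sym_basis m (m - j))))"
    by (simp add: phi_sum phi_scale phi_x_funpow_w coord_in_K)
  also have "\<dots> = dsum_act m mat_w (phi v)"
    by (auto simp: dsum_act_def phi_def sym_act_sum sym_act_smult sym_act_w_sym_basis w_coeff_def mult_ac
        intro!: ext sum.cong)
  finally show ?thesis .
qed

lemma phi_u: "phi (\<rho> mat_u v) = dsum_act m mat_u (phi v)"
proof -
  let ?a = "coord v"
  have "\<rho> mat_u v = (\<Sum>k\<le>m. scale (1 / fact k) (\<Sum>j\<le>m. (x ^^ (k + j)) (w (?a j))))"
    using rho_u_eq_exp_x[of v] x_funpow_Psi[of _ ?a] Psi_coord[of v] Suc_m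
    by (simp add: lessThan_Suc_atMost[symmetric])
  then have "phi (\<rho> mat_u v) =
      (\<lambda>b. \<Sum>k\<le>m. smult (1 / fact k) (\<Sum>j\<le>m. smult (repr (?a j) b) (sym_basis m (k + j))))"
    by (simp add: phi_sum phi_scale phi_x_funpow_w coord_in_K)
  also have "\<dots> = (\<lambda>b. \<Sum>j\<le>m. smult (repr (?a j) b) (\<Sum>k\<le>m. smult (1 / fact k) (sym_basis m (j + k))))"
    by (intro ext) (simp only: smult_sum_right, subst sum.swap, simp add: add.commute mult.commute)
  also have "\<dots> = dsum_act m mat_u (phi v)"
    by (auto simp: dsum_act_def phi_def sym_act_sum sym_act_smult sym_act_u_sym_basis intro!: ext sum.cong)
  finally show ?thesis .
qed

lemma degree_phi: "degree (phi v b) \<le> m"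
  unfolding phi_def by (intro degree_sum_le finite_atMost order.trans[OF degree_smult_le degree_sym_basis])

lemma phi_rho: "g \<in> SL2Z \<Longrightarrow> phi (\<rho> g v) = dsum_act m g (phi v)"
proof (induction arbitrary: v rule: SL2Z_induct)
  case (u g)
  then show ?case
    by (simp add: rho_mmul mat_u_SL2Z phi_u dsum_act_def sym_act_mmul_SL2Z)
next
  case (w g)
  then show ?case
    by (simp add: rho_mmul mat_w_SL2Z phi_w dsum_act_def sym_act_mmul_SL2Z)
next
  case one
  then show ?case
    by (simp only: rho_one dsum_act_def sym_act_one[OF degree_phi])
qed

lemma phi_eq_0:
  assumes "phi v = (\<lambda>b. 0)"
  shows "v = 0"
proof -
  have "repr (coord v j) b = 0" if "j \<le> m" for j b
    using fun_cong[OF assms, of b] coeff_sum_sym_basis[OF that, of "\<lambda>j. repr (coord v j) b"]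
    by (simp add: phi_def)
  then have "coord v j = 0" if "j \<le> m" for j
    using that sum_nonzero_representation_eq[OF independent_basis_K in_K_in_span[OF coord_in_K[of v j]]] by simp
  then have "Psi (coord v) = Psi (\<lambda>j. 0)"
    by (rule Psi_cong)
  then show ?thesis
    by (simp add: Psi_coord)
qed

lemma inj_phi: "inj phi"
proof (rule injI)
  fix v v' assume "phi v = phi v'"
  then have "phi (v - v') = (\<lambda>b. 0)"
    using phi_add[of v "scale (-1) v'"] phi_scale[of "-1" v'] by simp
  then show "v = v'"
    using phi_eq_0 by force
qed

lemma phi_in_dsum_carrier: "phi v \<in> dsum_carrier basis_K m"
proof -
  have "{b. phi v b \<noteq> 0} \<subseteq> (\<Union>j\<le>m. {b. repr (coord v j) b \<noteq> 0})"
    by (auto simp: phi_def intro: ccontr)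
  moreover have "finite (\<Union>j\<le>m. {b. repr (coord v j) b \<noteq> 0})"
    by (simp add: finite_representation)
  moreover have "phi v b = 0" if "b \<notin> basis_K" for b
  proof -
    have "repr u b = 0" for u
      using that representation_ne_zero by blast
    then show ?thesis
      by (simp add: phi_def)
  qed
  ultimately show ?thesis
    using degree_phi by (auto simp: dsum_carrier_def sym_carrier_def intro: finite_subset)
qed

lemma dsum_carrier_subset_range_phi:
  assumes f: "f \<in> dsum_carrier basis_K m"
  shows "f \<in> range phi"
proof -
  define S where "S = {b. f b \<noteq> 0}"
  have S: "finite S" "S \<subseteq> basis_K"
    using f by (auto simp: dsum_carrier_def S_def)
  define a where "a j = (\<Sum>b\<in>S. scale (coeff (f b) j * fact (m - j)) b)" for j
  have a: "a j \<in> K" for j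
    unfolding a_def span_basis_K[symmetric] using S by (intro span_sum span_scale span_base) auto
  have "repr (a j) b = coeff (f b) j * fact (m - j)" for j b
    unfolding a_def using representation_sum_scale[OF independent_basis_K S] by (simp add: S_def)
  then have "phi (Psi a) b = f b" for b
    using f sum_sym_basis_coeff[of "f b" m] by (simp add: phi_Psi a dsum_carrier_def sym_carrier_def)
  then show ?thesis
    by (metis rangeI ext)
qed

lemma iso_to_dsum_phi: "iso_to_dsum scale \<rho> basis_K m phi"
  unfolding iso_to_dsum_def
  using inj_phi phi_in_dsum_carrier dsum_carrier_subset_range_phi phi_add phi_scale phi_rho by blast

end

theorem lemma2:
  fixes scale :: "rat \<Rightarrow> 'v::ab_group_add \<Rightarrow> 'v"
    and \<rho> :: "mat2 \<Rightarrow> 'v \<Rightarrow> 'v"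
    and n :: nat
  defines "x \<equiv> xop scale \<rho> n"
    and "w \<equiv> \<rho> mat_w"
  assumes n2: "n \<ge> 2"
    and rep: "is_rep scale \<rho>"
    and len: "length_le \<rho> n"
    and rel: "\<forall>k\<in>{1..n}. \<forall>v.
        scale (1 / fact (n - k)) (w ((x ^^ (n - k)) (w ((x ^^ (n - 1)) v))))
      = scale ((-1) ^ (n - k) / fact (k - 1)) ((x ^^ (k - 1)) (w ((x ^^ (n - 1)) v)))"
    and alt: "(\<forall>v. x v = 0 \<and> (x ^^ (n - 1)) (w v) = 0 \<longrightarrow> v = 0)
           \<or> (\<forall>v. \<exists>a b. v = x a + w ((x ^^ (n - 1)) b))"
  shows "\<exists>(I :: 'v set) \<phi>. iso_to_dsum scale \<rho> I (n - 1) \<phi>"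
proof -
  interpret lemma2_setting scale \<rho> n
    using n2 rep len rel alt unfolding x_def w_def by unfold_locales auto
  show ?thesis
    using iso_to_dsum_phi by blast
qed

end
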